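(* Let $r\ge6$ be a composite integer, written as $r=2^ep_z^{e_z}\cdots p_1^{e_1}$ with $e\ge0$, $z\ge0$, $p_1>\dots>p_z$ distinct odd primes and $e_j\ge1$. Let $q$ be a prime power, with $q\ge3$ if $r$ is even, and let $k\ge1$. Put $\ell_j=(p_j-3)/2$, $\Pi_j=\prod_{h=1}^jp_h^{e_h}$ ($\Pi_0=1$), and $$N_r(k,q)=\prod_{j=1}^{z}\prod_{i=1}^{e_j}\frac{q^{p_j^{i-1}\Pi_{j-1}k}\big(q^{(\ell_j+1)p_j^{i-1}\Pi_{j-1}k}-1\big)\big(q^{p_j^{i}\Pi_{j-1}k}-1\big)}{q^{p_j^{i-1}\Pi_{j-1}k}-1}\cdot\prod_{i=1}^{e}\left(\left\lfloor\frac{q-1}{2}\right\rfloor\frac{q^{2^i\Pi_zk}-1}{q-1}\right)$$ (empty products equal $1$), and $$S_3(rk,k,q)=q^k\,\frac{q^{(\ell+1)k}-1}{q^k-1}\,(q^{rk}-1),\qquad \ell=\left\lceil r/2\right\rceil-2.$$ Then $S_3(rk,k,q)/N_r(k,q)\to0$ as $k\to\infty$ with $q$ fixed, and also as $q\to\infty$ (over admissible prime powers) with $k$ fixed. If moreover $r$ is odd, write $r=2h+1$ and put $$S_4(rk,k,q)=h\left((q^k-1)^h(q^{rk}-1)+\frac{(q^k-1)^{h-1}(q^{rk}-1)}{q-1}\right),\qquad S_5(rk,k,q)=hq^k(q^k-1)^{h-1}(q^{rk}-1)+\frac{q^{rk}-1}{q^k-1};$$ then $S_4(rk,k,q)/N_r(k,q)\to0$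 and $S_5(rk,k,q)/N_r(k,q)\to0$ both as $k\to\infty$ with $q$ fixed and as $q\to\infty$ with $k$ fixed.
   Context: $N_r(k,q)$ is the cardinality of the paper's cyclic subspace codes in the Grassmannian of $k$-dimensional $\mathbb{F}_q$-subspaces of $\mathbb{F}_{q^{rk}}$ with minimum distance $2k-2$, and $S_3,S_4,S_5$ are the sizes of previously known codes with the same parameters; the statement is purely a comparison of these explicit functions. *)

theory Defs
  imports "HOL-Analysis.Analysis" "HOL-Number_Theory.Number_Theory"
begin

definition odd_primes_desc :: "nat \<Rightarrow> nat list" where
  "odd_primes_desc r = rev (sorted_list_of_set {p. prime p \<and> odd p \<and> p dvd r})"

definition zz :: "nat \<Rightarrow> nat" where
  "zz r = length (odd_primes_desc r)"

definition pj :: "nat \<Rightarrow> nat \<Rightarrow> nat" where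
  "pj r j = odd_primes_desc r ! (j - 1)"

definition ej :: "nat \<Rightarrow> nat \<Rightarrow> nat" where
  "ej r j = multiplicity (pj r j) r"

definition e2 :: "nat \<Rightarrow> nat" where
  "e2 r = multiplicity (2::nat) r"

definition Pij :: "nat \<Rightarrow> nat \<Rightarrow> nat" where
  "Pij r j = (\<Prod>h=1..j. pj r h ^ ej r h)"

definition lj :: "nat \<Rightarrow> nat \<Rightarrow> nat" where
  "lj r j = (pj r j - 3) div 2"

definition Nr :: "nat \<Rightarrow> nat \<Rightarrow> nat \<Rightarrow> real" where
  "Nr r k q =
    (\<Prod>j=1..zz r. \<Prod>i=1..ej r j.
        let a = pj r j ^ (i - 1) * Pij r (j - 1) * k in
        real q ^ a * (real q ^ ((lj r j + 1) * a) - 1)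
          * (real q ^ (pj r j ^ i * Pij r (j - 1) * k) - 1) / (real q ^ a - 1))
    * (\<Prod>i=1..e2 r. real ((q - 1) div 2)
          * ((real q ^ (2 ^ i * Pij r (zz r) * k) - 1) / (real q - 1)))"

definition S3 :: "nat \<Rightarrow> nat \<Rightarrow> nat \<Rightarrow> real" where
  "S3 r k q = (let l = nat (\<lceil>real r / 2\<rceil> - 2) in
     real q ^ k * (real q ^ ((l + 1) * k) - 1) / (real q ^ k - 1) * (real q ^ (r * k) - 1))"

definition S4 :: "nat \<Rightarrow> nat \<Rightarrow> nat \<Rightarrow> real" where
  "S4 r k q = (let h = (r - 1) div 2 in
     real h * ((real q ^ k - 1) ^ h * (real q ^ (r * k) - 1)
       + (real q ^ k - 1) ^ (h - 1) * (real q ^ (r * k) - 1) / (real q - 1)))"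

definition S5 :: "nat \<Rightarrow> nat \<Rightarrow> nat \<Rightarrow> real" where
  "S5 r k q = (let h = (r - 1) div 2 in
     real h * real q ^ k * (real q ^ k - 1) ^ (h - 1) * (real q ^ (r * k) - 1)
       + (real q ^ (r * k) - 1) / (real q ^ k - 1))"

definition admissible :: "nat \<Rightarrow> nat \<Rightarrow> bool" where
  "admissible r q \<longleftrightarrow> primepow q \<and> (even r \<longrightarrow> q \<ge> 3)"

end

theory Submission
  imports Defs
begin

text \<open>Every factor of \<open>N\<^sub>r(k,q)\<close> is at least 1/4 times a power of q, so
  N_r(k,q) >= c q^(k D) with c > 0 depending only on r, where D is the degree of N_r in q^k;
  on the other side S_3 = O(q^(k (l + 1 + r))) and S_4, S_5 = O(q^(k (h + r))).
  Telescoping the sum defining D gives 2 D + 3 + Pi_z = 2 Y + 4 r with Y the sum of all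
  p_j^(i-1) Pi_(j-1). For even r we have Pi_z <= r/2, and for odd composite r we have Pi_z = r
  and Y >= 2; either way 3 r <= 2 D, so D exceeds both exponents. Hence every ratio is
  O(q^(-k)), which tends to 0 both as k and as q tend to infinity.\<close>

section \<open>The prime factorization data of r\<close>

lemma set_odd_primes_desc:
  assumes "0 < r"
  shows "set (odd_primes_desc r) = {p. prime p \<and> odd p \<and> p dvd r}"
    and "distinct (odd_primes_desc r)"
proof -
  have "finite {p. prime p \<and> odd p \<and> p dvd r}"
    by (rule finite_subset[of _ "{..r}"]) (auto intro: dvd_imp_le assms)
  then show "set (odd_primes_desc r) = {p. prime p \<and> odd p \<and> p dvd r}"
    and "distinct (odd_primes_desc r)"
    by (simp_all add: odd_primes_desc_def)
qed

lemma pj_odd_prime_divisor: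
  assumes "0 < r" "j \<in> {1..zz r}"
  shows "prime (pj r j) \<and> odd (pj r j) \<and> pj r j dvd r"
proof -
  have "pj r j \<in> set (odd_primes_desc r)"
    unfolding pj_def using assms(2) by (intro nth_mem) (auto simp: zz_def)
  then show ?thesis using set_odd_primes_desc(1)[OF assms(1)] by auto
qed

lemma pj_ge_3:
  assumes "0 < r" "j \<in> {1..zz r}"
  shows "3 \<le> pj r j"
proof -
  have "prime (pj r j)" "odd (pj r j)" using pj_odd_prime_divisor[OF assms] by auto
  then show ?thesis using prime_ge_2_nat[of "pj r j"] by (cases "pj r j = 2") auto
qed

lemma pj_eq_lj:
  assumes "0 < r" "j \<in> {1..zz r}"
  shows "pj r j = 2 * lj r j + 3"
proof -
  have "odd (pj r j)" "3 \<le> pj r j" using pj_odd_prime_divisor[OF assms] pj_ge_3[OF assms] by auto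
  moreover have "odd p \<Longrightarrow> 3 \<le> p \<Longrightarrow> p = 2 * ((p - 3) div 2) + 3" for p :: nat
    by presburger
  ultimately show ?thesis unfolding lj_def by blast
qed

lemma ej_pos:
  assumes "0 < r" "j \<in> {1..zz r}"
  shows "1 \<le> ej r j"
proof -
  have "prime (pj r j)" "pj r j dvd r" using pj_odd_prime_divisor[OF assms] by auto
  then show ?thesis
    using assms(1) prime_multiplicity_gt_zero_iff[of "pj r j" r] unfolding ej_def
    by (simp add: prime_imp_prime_elem)
qed

lemma Pij_Suc: "Pij r (Suc j) = Pij r j * pj r (Suc j) ^ ej r (Suc j)"
  unfolding Pij_def by simp

lemma Pij_pos:
  assumes "0 < r" "j \<le> zz r"
  shows "1 \<le> Pij r j"
  unfolding Pij_def using assms pj_ge_3[of r] by (intro prod_ge_1 one_le_power) force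

lemma e2_pos_iff_even:
  assumes "0 < r"
  shows "0 < e2 r \<longleftrightarrow> even r"
  using assms prime_multiplicity_gt_zero_iff[of "2::nat" r] unfolding e2_def
  by (simp add: prime_imp_prime_elem)

lemma e2_Pij_factorization:
  assumes "0 < r"
  shows "2 ^ e2 r * Pij r (zz r) = r"
proof -
  define L where "L = odd_primes_desc r"
  define g where "g p = p ^ multiplicity p r" for p :: nat
  have shift: "bij_betw (\<lambda>h. h - 1) {1..zz r} {..<length L}"
    by (rule bij_betwI[where g = Suc]) (auto simp: zz_def L_def)
  have nth: "bij_betw ((!) L) {..<length L} (set L)"
    using set_odd_primes_desc(2)[OF assms] unfolding L_def
    by (simp add: bij_betw_nth lessThan_atLeast0)
  have "bij_betw (\<lambda>h. L ! (h - 1)) {1..zz r} (set L)"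
    using bij_betw_trans[OF shift nth] by (simp add: comp_def)
  then have "Pij r (zz r) = (\<Prod>p\<in>set L. g p)"
    unfolding Pij_def pj_def ej_def g_def L_def by (rule prod.reindex_bij_betw)
  also have "set L = prime_factors r - {2}"
  proof -
    have "odd p \<longleftrightarrow> p \<noteq> 2" if "prime p" for p :: nat
      using that prime_ge_2_nat[of p] prime_odd_nat[of p] by force
    then show ?thesis
      using set_odd_primes_desc(1)[OF assms] assms unfolding L_def
      by (auto simp: in_prime_factors_iff)
  qed
  finally have P: "Pij r (zz r) = (\<Prod>p\<in>prime_factors r - {2}. g p)" .
  have R: "r = (\<Prod>p\<in>prime_factors r. g p)"
    unfolding g_def using prime_factorization_nat assms by blast
  show ?thesis
  proof (cases "2 \<in> prime_factors r")
    case True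
    then show ?thesis
      using P R prod.remove[OF finite_set_mset True, of g] by (simp add: e2_def g_def)
  next
    case False
    then have "e2 r = 0"
      using assms e2_pos_iff_even[OF assms] by (auto simp: in_prime_factors_iff)
    then show ?thesis using P R False by simp
  qed
qed

section \<open>The degree of \<open>N\<^sub>r\<close>\<close>

definition base_exp :: "nat \<Rightarrow> nat \<Rightarrow> nat \<Rightarrow> nat" where
  "base_exp r j i = pj r j ^ (i - 1) * Pij r (j - 1)"

text \<open>The degree of N_r(k,q) in q^k: with a = base_exp r j i * k, the (j,i) factor
  q^a (q^((l_j+1) a) - 1) (q^(p_j a) - 1) / (q^a - 1) has degree (l_j + 1 + p_j) a.\<close>
definition degN :: "nat \<Rightarrow> nat" where
  "degN r = (\<Sum>j=1..zz r. \<Sum>i=1..ej r j. (lj r j + 1 + pj r j) * base_exp r j i)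
          + (\<Sum>i=1..e2 r. 2 ^ i * Pij r (zz r))"

lemma geometric_block_sum:
  fixes l p P e :: nat
  assumes "p = 2 * l + 3"
  shows "2 * (\<Sum>i=1..e. (l + 1 + p) * (p ^ (i - 1) * P)) + 3 * P
       = 3 * p ^ e * P + 2 * (\<Sum>i=1..e. p ^ (i - 1) * P)"
proof (induction e)
  case 0
  then show ?case by simp
next
  case (Suc e)
  have "2 * (l + 1 + p) * (p ^ e * P) + 3 * p ^ e * P = 3 * p ^ Suc e * P + 2 * (p ^ e * P)"
    using assms by (simp add: algebra_simps)
  then show ?case using Suc.IH by (simp add: algebra_simps)
qed

lemma sum_odd_blocks:
  assumes "0 < r" "n \<le> zz r"
  shows "2 * (\<Sum>j=1..n. \<Sum>i=1..ej r j. (lj r j + 1 + pj r j) * base_exp r j i) + 3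
       = 3 * Pij r n + 2 * (\<Sum>j=1..n. \<Sum>i=1..ej r j. base_exp r j i)"
  using assms(2)
proof (induction n)
  case 0
  then show ?case by (simp add: Pij_def)
next
  case (Suc n)
  have "pj r (Suc n) = 2 * lj r (Suc n) + 3"
    using pj_eq_lj[OF assms(1)] Suc.prems by simp
  from geometric_block_sum[OF this, where e = "ej r (Suc n)" and P = "Pij r n"]
  show ?case using Suc by (simp add: base_exp_def Pij_Suc algebra_simps)
qed

lemma sum_two_pow_mult: "(\<Sum>i=1..e. 2 ^ i * P) + 2 * P = 2 * 2 ^ e * (P::nat)"
  by (induction e) simp_all

lemma degN_identity:
  assumes "0 < r"
  shows "2 * degN r + 3 + Pij r (zz r) = 2 * (\<Sum>j=1..zz r. \<Sum>i=1..ej r j. base_exp r j i) + 4 * r"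
  using sum_odd_blocks[OF assms order_refl] sum_two_pow_mult[where e = "e2 r" and P = "Pij r (zz r)"]
    e2_Pij_factorization[OF assms]
  unfolding degN_def by (simp add: algebra_simps)

lemma sum_ej_le_sum_base_exp:
  assumes "0 < r"
  shows "(\<Sum>j=1..zz r. ej r j) \<le> (\<Sum>j=1..zz r. \<Sum>i=1..ej r j. base_exp r j i)"
proof (intro sum_mono)
  fix j assume j: "j \<in> {1..zz r}"
  have "1 \<le> Pij r (j - 1)" using Pij_pos[OF assms, of "j - 1"] j by auto
  then have "1 \<le> base_exp r j i" for i
    using pj_ge_3[OF assms j] unfolding base_exp_def by (simp add: one_le_mult_iff)
  then have "(\<Sum>i=1..ej r j. 1) \<le> (\<Sum>i=1..ej r j. base_exp r j i)"
    by (intro sum_mono) auto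
  then show "ej r j \<le> (\<Sum>i=1..ej r j. base_exp r j i)" by simp
qed

lemma odd_Pij_zz:
  assumes "0 < r" "odd r"
  shows "Pij r (zz r) = r"
  using e2_Pij_factorization[OF assms(1)] e2_pos_iff_even[OF assms(1)] assms(2) by simp

lemma two_le_sum_ej:
  assumes "odd r" "1 < r" "\<not> prime r"
  shows "2 \<le> (\<Sum>j=1..zz r. ej r j)"
proof -
  have r0: "0 < r" using assms(2) by simp
  note Pr = odd_Pij_zz[OF r0 assms(1)]
  consider "zz r = 0" | "zz r = 1" | "2 \<le> zz r" by linarith
  then show ?thesis
  proof cases
    case 1
    then show ?thesis using Pr assms(2) by (simp add: Pij_def)
  next
    case 2
    then have "r = pj r 1 ^ ej r 1" "prime (pj r 1)" "1 \<le> ej r 1"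
      using Pr pj_odd_prime_divisor[OF r0, of 1] ej_pos[OF r0, of 1] by (simp_all add: Pij_def)
    then have "ej r 1 \<noteq> 1" using assms(3) by auto
    then show ?thesis using 2 \<open>1 \<le> ej r 1\<close> by simp
  next
    case 3
    have "(\<Sum>j=1..zz r. 1) \<le> (\<Sum>j=1..zz r. ej r j)"
      using ej_pos[OF r0] by (intro sum_mono) auto
    then show ?thesis using 3 by simp
  qed
qed

lemma three_mult_le_two_degN:
  assumes "6 \<le> r" "\<not> prime r"
  shows "3 * r \<le> 2 * degN r"
proof -
  have r0: "0 < r" using assms(1) by simp
  note identity = degN_identity[OF r0]
  show ?thesis
  proof (cases "even r")
    case True
    then have "2 \<le> (2::nat) ^ e2 r"
      using e2_pos_iff_even[OF r0] by (cases "e2 r") auto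
    then have "2 * Pij r (zz r) \<le> r"
      using e2_Pij_factorization[OF r0] mult_le_mono1 by metis
    then show ?thesis using identity assms(1) by linarith
  next
    case False
    then show ?thesis
      using identity odd_Pij_zz[OF r0 False] sum_ej_le_sum_base_exp[OF r0]
        two_le_sum_ej[OF False _ assms(2)] assms(1)
      by linarith
  qed
qed

lemma S3_exponent_lt:
  assumes "4 \<le> r"
  shows "2 * (nat (\<lceil>real r / 2\<rceil> - 2) + 1) < r"
proof -
  define c where "c = \<lceil>real r / 2\<rceil>"
  have "real r / 2 \<le> of_int c" "of_int c < real r / 2 + 1"
    unfolding c_def by linarith+
  then have "int r \<le> 2 * c" "2 * c < int r + 2" by linarith+
  then have "int (2 * (nat (c - 2) + 1)) < int r" using assms by simp
  then show ?thesis unfolding c_def by linarith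
qed

section \<open>Lower bound for \<open>N\<^sub>r\<close>\<close>

lemma power_ge_2:
  fixes x :: real
  assumes "2 \<le> x" "1 \<le> n"
  shows "2 \<le> x ^ n"
  using power_increasing[OF assms(2), of x] assms(1) by simp

lemma power_diff_quotient_ge:
  fixes x :: real
  assumes "2 \<le> x" "1 \<le> a" "1 \<le> b" "1 \<le> c"
  shows "x ^ (b + c) / 4 \<le> x ^ a * (x ^ b - 1) * (x ^ c - 1) / (x ^ a - 1)"
proof -
  have "2 \<le> x ^ a" "2 \<le> x ^ b" "2 \<le> x ^ c"
    using power_ge_2[OF assms(1)] assms(2-4) by auto
  then have "x ^ b / 2 \<le> x ^ b - 1" "x ^ c / 2 \<le> x ^ c - 1" "1 \<le> x ^ a / (x ^ a - 1)"
    by auto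
  then have "1 * ((x ^ b / 2) * (x ^ c / 2)) \<le> (x ^ a / (x ^ a - 1)) * ((x ^ b - 1) * (x ^ c - 1))"
    using assms(1) by (intro mult_mono) auto
  then show ?thesis by (simp add: power_add)
qed

lemma floor_half_mult_geometric_ge:
  fixes q M :: nat
  assumes "3 \<le> q" "1 \<le> M"
  shows "real q ^ M / 4 \<le> real ((q - 1) div 2) * ((real q ^ M - 1) / (real q - 1))"
proof -
  have "q \<le> 4 * ((q - 1) div 2)" using assms(1) by presburger
  then have A: "real q / 4 \<le> real ((q - 1) div 2)" by linarith
  have "real q ^ (M - 1) * (real q - 1) \<le> real q ^ M - 1"
    using assms one_le_power[of "real q" "M - 1"] by (cases M) (auto simp: algebra_simps)
  then have B: "real q ^ (M - 1) \<le> (real q ^ M - 1) / (real q - 1)"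
    using assms(1) by (simp add: field_simps)
  have "real q ^ M / 4 = (real q / 4) * real q ^ (M - 1)"
    using assms(2) by (cases M) auto
  also have "\<dots> \<le> real ((q - 1) div 2) * ((real q ^ M - 1) / (real q - 1))"
    by (intro mult_mono A B) auto
  finally show ?thesis .
qed

lemma prod_mult_power_le:
  fixes x :: real
  assumes "0 \<le> x" "\<And>i. i \<in> A \<Longrightarrow> 0 \<le> c i \<and> c i * x ^ d i \<le> f i"
  shows "(\<Prod>i\<in>A. c i) * x ^ (\<Sum>i\<in>A. d i) \<le> (\<Prod>i\<in>A. f i)"
proof -
  have "(\<Prod>i\<in>A. c i) * x ^ (\<Sum>i\<in>A. d i) = (\<Prod>i\<in>A. c i * x ^ d i)"
    by (simp add: power_sum prod.distrib)
  also have "\<dots> \<le> (\<Prod>i\<in>A. f i)"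
    using assms by (intro prod_mono) auto
  finally show ?thesis .
qed

lemma admissible_ge_2: "admissible r q \<Longrightarrow> 2 \<le> q"
  using primepow_gt_Suc_0 unfolding admissible_def by fastforce

lemma Nr_odd_factor_ge:
  assumes "0 < r" "j \<in> {1..zz r}" "i \<in> {1..ej r j}" "1 \<le> k" "2 \<le> q"
  shows "1 / 4 * real q ^ (k * ((lj r j + 1 + pj r j) * base_exp r j i))
    \<le> (let a = pj r j ^ (i - 1) * Pij r (j - 1) * k in
        real q ^ a * (real q ^ ((lj r j + 1) * a) - 1)
          * (real q ^ (pj r j ^ i * Pij r (j - 1) * k) - 1) / (real q ^ a - 1))"
proof -
  define a where "a = pj r j ^ (i - 1) * Pij r (j - 1) * k"
  have "1 \<le> Pij r (j - 1)" using Pij_pos[OF assms(1), of "j - 1"] assms(2) by auto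
  then have a1: "1 \<le> a"
    using pj_ge_3[OF assms(1,2)] assms(4) unfolding a_def by (simp add: one_le_mult_iff)
  have "pj r j ^ i = pj r j * pj r j ^ (i - 1)"
    using assms(3) by (cases i) auto
  then have pj_a: "pj r j ^ i * Pij r (j - 1) * k = pj r j * a"
    unfolding a_def by simp
  have "1 \<le> pj r j" using pj_ge_3[OF assms(1,2)] by simp
  then have "real q ^ ((lj r j + 1) * a + pj r j * a) / 4
    \<le> real q ^ a * (real q ^ ((lj r j + 1) * a) - 1) * (real q ^ (pj r j * a) - 1) / (real q ^ a - 1)"
    using assms(5) a1 by (intro power_diff_quotient_ge) auto
  moreover have "(lj r j + 1) * a + pj r j * a = k * ((lj r j + 1 + pj r j) * base_exp r j i)"
    unfolding a_def base_exp_def by (simp add: algebra_simps)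
  ultimately show ?thesis unfolding Let_def pj_a a_def[symmetric] by simp
qed

lemma Nr_even_factor_ge:
  assumes "0 < r" "i \<in> {1..e2 r}" "1 \<le> k" "admissible r q"
  shows "1 / 4 * real q ^ (k * (2 ^ i * Pij r (zz r)))
    \<le> real ((q - 1) div 2) * ((real q ^ (2 ^ i * Pij r (zz r) * k) - 1) / (real q - 1))"
proof -
  have "even r" using assms(2) e2_pos_iff_even[OF assms(1)] by simp
  then have q3: "3 \<le> q" using assms(4) unfolding admissible_def by blast
  have "1 \<le> 2 ^ i * Pij r (zz r) * k"
    using Pij_pos[OF assms(1) order_refl] assms(3) by (simp add: one_le_mult_iff)
  from floor_half_mult_geometric_ge[OF q3 this] show ?thesis by (simp add: mult.commute)
qed

lemma Nr_lower_bound: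
  assumes "0 < r"
  obtains c where "0 < c"
    and "\<And>k q. 1 \<le> k \<Longrightarrow> admissible r q \<Longrightarrow> c * real q ^ (k * degN r) \<le> Nr r k q"
proof
  define c\<^sub>o where "c\<^sub>o = (\<Prod>j=1..zz r. \<Prod>i=1..ej r j. 1 / 4 :: real)"
  define c\<^sub>e where "c\<^sub>e = (\<Prod>i=1..e2 r. 1 / 4 :: real)"
  show "0 < c\<^sub>o * c\<^sub>e" unfolding c\<^sub>o_def c\<^sub>e_def by (simp add: prod_pos)
  fix k q :: nat assume k: "1 \<le> k" and q: "admissible r q"
  have q2: "2 \<le> q" using admissible_ge_2[OF q] .
  have odd_part: "c\<^sub>o * real q ^ (\<Sum>j=1..zz r. \<Sum>i=1..ej r j. k * ((lj r j + 1 + pj r j) * base_exp r j i))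
    \<le> (\<Prod>j=1..zz r. \<Prod>i=1..ej r j.
        let a = pj r j ^ (i - 1) * Pij r (j - 1) * k in
        real q ^ a * (real q ^ ((lj r j + 1) * a) - 1)
          * (real q ^ (pj r j ^ i * Pij r (j - 1) * k) - 1) / (real q ^ a - 1))"
    unfolding c\<^sub>o_def
    using Nr_odd_factor_ge[OF assms _ _ k q2]
    by (intro prod_mult_power_le conjI) (simp_all add: prod_nonneg)
  have even_part: "c\<^sub>e * real q ^ (\<Sum>i=1..e2 r. k * (2 ^ i * Pij r (zz r)))
    \<le> (\<Prod>i=1..e2 r. real ((q - 1) div 2) * ((real q ^ (2 ^ i * Pij r (zz r) * k) - 1) / (real q - 1)))"
    unfolding c\<^sub>e_def
    using Nr_even_factor_ge[OF assms _ k q]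
    by (intro prod_mult_power_le conjI) simp_all
  have "k * degN r = (\<Sum>j=1..zz r. \<Sum>i=1..ej r j. k * ((lj r j + 1 + pj r j) * base_exp r j i))
      + (\<Sum>i=1..e2 r. k * (2 ^ i * Pij r (zz r)))"
    unfolding degN_def by (simp only: add_mult_distrib2 sum_distrib_left)
  then have "c\<^sub>o * c\<^sub>e * real q ^ (k * degN r)
    = (c\<^sub>o * real q ^ (\<Sum>j=1..zz r. \<Sum>i=1..ej r j. k * ((lj r j + 1 + pj r j) * base_exp r j i)))
      * (c\<^sub>e * real q ^ (\<Sum>i=1..e2 r. k * (2 ^ i * Pij r (zz r))))"
    by (simp only: power_add mult_ac)
  also have "\<dots> \<le> Nr r k q"
    unfolding Nr_def
    using odd_part even_part by (rule mult_mono') (simp_all add: c\<^sub>o_def c\<^sub>e_def prod_nonneg)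
  finally show "c\<^sub>o * c\<^sub>e * real q ^ (k * degN r) \<le> Nr r k q" .
qed

section \<open>Upper bounds for \<open>S\<^sub>3\<close>, \<open>S\<^sub>4\<close>, \<open>S\<^sub>5\<close>\<close>

lemma divide_le_self_of_one_le:
  fixes a b :: real
  assumes "0 \<le> a" "1 \<le> b"
  shows "a / b \<le> a"
  using assms by (simp add: divide_le_eq mult_le_cancel_left1)

lemma S3_bounds:
  assumes "1 \<le> k" "2 \<le> q"
  shows "0 \<le> S3 r k q \<and> S3 r k q \<le> 2 * real q ^ (k * (nat (\<lceil>real r / 2\<rceil> - 2) + 1 + r))"
proof -
  define x where "x = real q"
  define L where "L = nat (\<lceil>real r / 2\<rceil> - 2) + 1"
  have x: "2 \<le> x" "2 \<le> x ^ k" using assms power_ge_2 unfolding x_def by auto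
  have A: "0 \<le> x ^ k / (x ^ k - 1)" "x ^ k / (x ^ k - 1) \<le> 2"
    using x(2) by (auto simp: field_simps)
  have B: "0 \<le> x ^ (L * k) - 1" "x ^ (L * k) - 1 \<le> x ^ (L * k)"
    and C: "0 \<le> x ^ (r * k) - 1" "x ^ (r * k) - 1 \<le> x ^ (r * k)"
    using x(1) by auto
  have S3_eq: "S3 r k q = (x ^ k / (x ^ k - 1)) * (x ^ (L * k) - 1) * (x ^ (r * k) - 1)"
    unfolding S3_def Let_def L_def x_def by simp
  have "0 \<le> S3 r k q" unfolding S3_eq using A B C by (intro mult_nonneg_nonneg) auto
  moreover have "S3 r k q \<le> 2 * x ^ (L * k) * x ^ (r * k)"
    unfolding S3_eq using A B C by (intro mult_mono) auto
  moreover have "2 * x ^ (L * k) * x ^ (r * k) = 2 * x ^ (k * (L + r))"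
    by (simp add: add_mult_distrib2 power_add mult.commute)
  ultimately show ?thesis unfolding L_def x_def by simp
qed

lemma S4_bounds:
  assumes "1 \<le> k" "2 \<le> q"
  shows "0 \<le> S4 r k q
    \<and> S4 r k q \<le> 2 * real ((r - 1) div 2) * real q ^ (k * ((r - 1) div 2 + r))"
proof -
  define x where "x = real q"
  define h where "h = (r - 1) div 2"
  define y where "y = x ^ k - 1"
  define z where "z = x ^ (r * k) - 1"
  have x: "2 \<le> x" "2 \<le> x ^ k" using assms power_ge_2 unfolding x_def by auto
  have y: "1 \<le> y" "y \<le> x ^ k" and z: "0 \<le> z" "z \<le> x ^ (r * k)"
    using x unfolding y_def z_def by auto
  have yh: "y ^ h \<le> x ^ (k * h)"
    using power_mono[OF y(2), of h] y(1) by (simp add: power_mult)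
  have "y ^ (h - 1) * z / (x - 1) \<le> y ^ (h - 1) * z"
    using x(1) y(1) z(1) by (intro divide_le_self_of_one_le) auto
  also have "\<dots> \<le> y ^ h * z"
    using y(1) z(1) by (intro mult_right_mono power_increasing) auto
  finally have second: "y ^ (h - 1) * z / (x - 1) \<le> y ^ h * z" .
  have "y ^ h * z \<le> x ^ (k * h) * x ^ (r * k)"
    using yh z y(1) x(1) by (intro mult_mono) auto
  also have "\<dots> = x ^ (k * (h + r))" by (simp add: power_add algebra_simps)
  finally have first: "y ^ h * z \<le> x ^ (k * (h + r))" .
  have nonneg: "0 \<le> y ^ h * z" "0 \<le> y ^ (h - 1) * z / (x - 1)"
    using y(1) z(1) x(1) by auto
  have "S4 r k q = real h * (y ^ h * z + y ^ (h - 1) * z / (x - 1))"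
    unfolding S4_def Let_def h_def x_def y_def z_def by simp
  moreover have "real h * (y ^ h * z + y ^ (h - 1) * z / (x - 1)) \<le> real h * (2 * x ^ (k * (h + r)))"
    using first second by (intro mult_left_mono) auto
  ultimately show ?thesis
    using nonneg unfolding h_def[symmetric] x_def[symmetric] by simp
qed

lemma S5_bounds:
  assumes "3 \<le> r" "1 \<le> k" "2 \<le> q"
  shows "0 \<le> S5 r k q
    \<and> S5 r k q \<le> (real ((r - 1) div 2) + 1) * real q ^ (k * ((r - 1) div 2 + r))"
proof -
  define x where "x = real q"
  define h where "h = (r - 1) div 2"
  define y where "y = x ^ k - 1"
  define z where "z = x ^ (r * k) - 1"
  have h1: "1 \<le> h" using assms(1) unfolding h_def by simp
  have x: "2 \<le> x" "2 \<le> x ^ k" using assms power_ge_2 unfolding x_def by auto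
  have y: "1 \<le> y" "y \<le> x ^ k" and z: "0 \<le> z" "z \<le> x ^ (r * k)"
    using x unfolding y_def z_def by auto
  have "x ^ k * y ^ (h - 1) \<le> x ^ k * (x ^ k) ^ (h - 1)"
    using power_mono[OF y(2), of "h - 1"] y(1) x(2) by (intro mult_left_mono) auto
  also have "\<dots> = x ^ (k * h)" using h1 by (cases h) (auto simp: power_add power_mult)
  finally have "x ^ k * y ^ (h - 1) * z \<le> x ^ (k * h) * x ^ (r * k)"
    using z y(1) x by (intro mult_mono) auto
  also have "\<dots> = x ^ (k * (h + r))" by (simp add: power_add algebra_simps)
  finally have first: "x ^ k * y ^ (h - 1) * z \<le> x ^ (k * (h + r))" .
  have "z / y \<le> z" using y(1) z(1) by (rule divide_le_self_of_one_le[rotated])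
  also have "\<dots> \<le> x ^ (r * k)" by (rule z(2))
  also have "\<dots> \<le> x ^ (k * (h + r))" using x(1) by (intro power_increasing) auto
  finally have second: "z / y \<le> x ^ (k * (h + r))" .
  have nonneg: "0 \<le> real h * (x ^ k * y ^ (h - 1) * z)" "0 \<le> z / y"
    using x y(1) z(1) by auto
  have "S5 r k q = real h * (x ^ k * y ^ (h - 1) * z) + z / y"
    unfolding S5_def Let_def h_def x_def y_def z_def by (simp add: mult.assoc)
  moreover have "real h * (x ^ k * y ^ (h - 1) * z) \<le> real h * x ^ (k * (h + r))"
    using first by (intro mult_left_mono) auto
  ultimately show ?thesis
    using nonneg second unfolding h_def[symmetric] x_def[symmetric] by (simp add: algebra_simps)
qed

section \<open>Comparison of growth rates\<close>

lemma ratio_le_inverse_power: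
  fixes S N C c x :: real
  assumes "1 \<le> x" "0 < c" "0 \<le> S" "S \<le> C * x ^ (k * d)" "c * x ^ (k * D) \<le> N" "d < D"
  shows "0 \<le> S / N \<and> S / N \<le> C / c * (1 / x) ^ k"
proof -
  have "x ^ (k * d) * x ^ k = x ^ (k * (d + 1))" by (simp add: power_add)
  also have "\<dots> \<le> x ^ (k * D)" using assms(1,6) by (intro power_increasing mult_le_mono2) auto
  finally have N: "c * (x ^ (k * d) * x ^ k) \<le> N"
    using assms(2,5) by (meson less_imp_le mult_left_mono order_trans)
  have pos: "0 < c * (x ^ (k * d) * x ^ k)" using assms(1,2) by simp
  have "S / N \<le> S / (c * (x ^ (k * d) * x ^ k))"
    using assms(3) N pos by (intro divide_left_mono) auto
  also have "\<dots> \<le> C * x ^ (k * d) / (c * (x ^ (k * d) * x ^ k))"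
    using assms(4) pos by (intro divide_right_mono) auto
  also have "\<dots> = C / c * (1 / x) ^ k"
    using assms(1,2) by (simp add: field_simps power_one_over)
  finally show ?thesis using assms(3) pos N by simp
qed

lemma tendsto_zero_of_degree_gap:
  fixes S N :: "nat \<Rightarrow> nat \<Rightarrow> real" and P :: "nat \<Rightarrow> bool"
  assumes P: "\<And>q. P q \<Longrightarrow> 2 \<le> q" and c: "0 < c" and gap: "d < D"
    and S: "\<And>k q. 1 \<le> k \<Longrightarrow> P q \<Longrightarrow> 0 \<le> S k q \<and> S k q \<le> C * real q ^ (k * d)"
    and N: "\<And>k q. 1 \<le> k \<Longrightarrow> P q \<Longrightarrow> c * real q ^ (k * D) \<le> N k q"
  shows "\<forall>q. P q \<longrightarrow> ((\<lambda>k. S k q / N k q) \<longlongrightarrow> 0) sequentially"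
    and "\<forall>k\<ge>1. ((\<lambda>q. S k q / N k q) \<longlongrightarrow> 0) (inf at_top (principal {q. P q}))"
proof -
  have bound: "norm (S k q / N k q) \<le> C / c * (1 / real q) ^ k" if "1 \<le> k" "P q" for k q
  proof -
    have "0 \<le> S k q / N k q \<and> S k q / N k q \<le> C / c * (1 / real q) ^ k"
      using P[OF that(2)] S[OF that] by (intro ratio_le_inverse_power[OF _ c _ _ N[OF that] gap]) auto
    then show ?thesis unfolding real_norm_def by (metis abs_of_nonneg)
  qed
  show "\<forall>q. P q \<longrightarrow> ((\<lambda>k. S k q / N k q) \<longlongrightarrow> 0) sequentially"
  proof (intro allI impI)
    fix q assume q: "P q"
    have "(\<lambda>k. C / c * (1 / real q) ^ k) \<longlonglongrightarrow> 0"
      using P[OF q] by (intro tendsto_mult_right_zero LIMSEQ_power_zero) auto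
    moreover have "\<forall>\<^sub>F k in sequentially. norm (S k q / N k q) \<le> C / c * (1 / real q) ^ k"
      using bound[OF _ q] unfolding eventually_sequentially by blast
    ultimately show "((\<lambda>k. S k q / N k q) \<longlongrightarrow> 0) sequentially"
      by (rule Lim_null_comparison[rotated])
  qed
  show "\<forall>k\<ge>1. ((\<lambda>q. S k q / N k q) \<longlongrightarrow> 0) (inf at_top (principal {q. P q}))"
  proof (intro allI impI)
    fix k :: nat assume k: "1 \<le> k"
    have "((\<lambda>q. (1 / real q) ^ k) \<longlongrightarrow> 0) at_top"
      using k by (simp add: lim_inverse_n')
    then have "((\<lambda>q. C / c * (1 / real q) ^ k) \<longlongrightarrow> 0) at_top"
      by (rule tendsto_mult_right_zero)
    then have "((\<lambda>q. C / c * (1 / real q) ^ k) \<longlongrightarrow> 0) (inf at_top (principal {q. P q}))"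
      by (rule tendsto_mono[OF inf_le1])
    moreover have "\<forall>\<^sub>F q in inf at_top (principal {q. P q}). norm (S k q / N k q) \<le> C / c * (1 / real q) ^ k"
      unfolding eventually_inf_principal using bound[OF k] by (intro always_eventually) simp
    ultimately show "((\<lambda>q. S k q / N k q) \<longlongrightarrow> 0) (inf at_top (principal {q. P q}))"
      by (rule Lim_null_comparison[rotated])
  qed
qed

theorem theorem4p1:
  fixes r :: nat
  assumes "r \<ge> 6" and "\<not> prime r"
  shows "(\<forall>q. admissible r q \<longrightarrow> ((\<lambda>k. S3 r k q / Nr r k q) \<longlongrightarrow> 0) sequentially)
       \<and> (\<forall>k\<ge>1. ((\<lambda>q. S3 r k q / Nr r k q) \<longlongrightarrow> 0)
              (inf at_top (principal {q. admissible r q})))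
       \<and> (odd r \<longrightarrow>
           (\<forall>q. admissible r q \<longrightarrow> ((\<lambda>k. S4 r k q / Nr r k q) \<longlongrightarrow> 0) sequentially)
         \<and> (\<forall>k\<ge>1. ((\<lambda>q. S4 r k q / Nr r k q) \<longlongrightarrow> 0)
              (inf at_top (principal {q. admissible r q})))
         \<and> (\<forall>q. admissible r q \<longrightarrow> ((\<lambda>k. S5 r k q / Nr r k q) \<longlongrightarrow> 0) sequentially)
         \<and> (\<forall>k\<ge>1. ((\<lambda>q. S5 r k q / Nr r k q) \<longlongrightarrow> 0)
              (inf at_top (principal {q. admissible r q}))))"
proof -
  obtain c where c: "0 < c"
    and N: "\<And>k q. 1 \<le> k \<Longrightarrow> admissible r q \<Longrightarrow> c * real q ^ (k * degN r) \<le> Nr r k q"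
    using Nr_lower_bound[of r] assms(1) by auto
  have lim: "(\<forall>q. admissible r q \<longrightarrow> ((\<lambda>k. S k q / Nr r k q) \<longlongrightarrow> 0) sequentially)
      \<and> (\<forall>k\<ge>1. ((\<lambda>q. S k q / Nr r k q) \<longlongrightarrow> 0) (inf at_top (principal {q. admissible r q})))"
    if "d < degN r" and "\<And>k q. 1 \<le> k \<Longrightarrow> 2 \<le> q \<Longrightarrow> 0 \<le> S k q \<and> S k q \<le> C * real q ^ (k * d)"
    for S C d
    using tendsto_zero_of_degree_gap[where P = "admissible r" and c = c and D = "degN r"]
      admissible_ge_2 c that N by blast
  have deg: "3 * r \<le> 2 * degN r" using three_mult_le_two_degN[OF assms] .
  have S3_gap: "nat (\<lceil>real r / 2\<rceil> - 2) + 1 + r < degN r"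
    using S3_exponent_lt[of r] deg assms(1) by linarith
  have odd_gap: "(r - 1) div 2 + r < degN r" if "odd r" using deg that by (auto elim!: oddE)
  have r3: "3 \<le> r" using assms(1) by simp
  show ?thesis
    using lim[OF S3_gap S3_bounds] lim[OF odd_gap S4_bounds] lim[OF odd_gap S5_bounds[OF r3]]
    by blast
qed

end
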